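(* Let $G$ be a bipartite graph and let $K:E(G)\to L_n$ be an edge-labeling with permutations from $L_n$. Then $(G,K)$ has no consistent vertex-labeling if and only if $G$ contains a chordless (induced) cycle $C$ such that $(C,K|_{E(C)})$ has no consistent vertex-labeling.
   Context: Labeled graphs: $G$ is a finite simple graph in which each edge is given a fixed orientation; $uv$ denotes the edge oriented from $u$ to $v$. An edge-labeling $K:E(G)\to S_n$ assigns to each edge a permutation of $[n]=\{0,\dots,n-1\}$. A vertex-labeling is a map $k:V(G)\to[n]$. An edge $uv$ with $K(uv)=\pi$ is a contradiction of $k$ if $\pi(k(u))\neq k(v)$. A vertex-labeling is consistent if it has no contradictions. $L_n=\{\pi_0,\dots,\pi_{n-1}\}\subseteq S_n$, where $\pi_i(x)\equiv i-x \pmod n$. Each $\pi_i$ is an involution, so orientation is irrelevant. *)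

theory Defs
  imports Main
begin

text \<open>A finite simple graph with a fixed orientation of each edge:
  vertex set V, set E of oriented edges (u,v), no loops, and no edge present
  in both orientations.\<close>
definition oriented_simple_graph :: "'a set \<Rightarrow> ('a \<times> 'a) set \<Rightarrow> bool" where
  "oriented_simple_graph V E \<longleftrightarrow> finite V \<and> E \<subseteq> V \<times> V \<and>
     (\<forall>u v. (u, v) \<in> E \<longrightarrow> u \<noteq> v \<and> (v, u) \<notin> E)"

definition adj :: "('a \<times> 'a) set \<Rightarrow> 'a \<Rightarrow> 'a \<Rightarrow> bool" where
  "adj E u v \<longleftrightarrow> (u, v) \<in> E \<or> (v, u) \<in> E"

definition bipartite :: "'a set \<Rightarrow> ('a \<times> 'a) set \<Rightarrow> bool" where
  "bipartite V E \<longleftrightarrow> (\<exists>A \<subseteq> V. \<forall>(u, v) \<in> E. (u \<in> A \<longleftrightarrow> v \<notin> A))"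

definition Lperm :: "nat \<Rightarrow> nat \<Rightarrow> nat \<Rightarrow> nat" where
  "Lperm n i x = nat ((int i - int x) mod int n)"

definition Ln :: "nat \<Rightarrow> (nat \<Rightarrow> nat) set" where
  "Ln n = {Lperm n i | i. i < n}"

definition consistent ::
  "'a set \<Rightarrow> ('a \<times> 'a) set \<Rightarrow> ('a \<times> 'a \<Rightarrow> nat \<Rightarrow> nat) \<Rightarrow> nat \<Rightarrow> ('a \<Rightarrow> nat) \<Rightarrow> bool" where
  "consistent V E K n k \<longleftrightarrow> (\<forall>v \<in> V. k v < n) \<and> (\<forall>(u, v) \<in> E. K (u, v) (k u) = k v)"

definition has_consistent ::
  "'a set \<Rightarrow> ('a \<times> 'a) set \<Rightarrow> ('a \<times> 'a \<Rightarrow> nat \<Rightarrow> nat) \<Rightarrow> nat \<Rightarrow> bool" where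
  "has_consistent V E K n \<longleftrightarrow> (\<exists>k. consistent V E K n k)"

definition chordless_cycle :: "'a set \<Rightarrow> ('a \<times> 'a) set \<Rightarrow> 'a list \<Rightarrow> bool" where
  "chordless_cycle V E cs \<longleftrightarrow> length cs \<ge> 3 \<and> distinct cs \<and> set cs \<subseteq> V \<and>
     (\<forall>i < length cs. adj E (cs ! i) (cs ! ((i + 1) mod length cs))) \<and>
     (\<forall>i < length cs. \<forall>j < length cs. adj E (cs ! i) (cs ! j) \<longrightarrow>
         j = (i + 1) mod length cs \<or> i = (j + 1) mod length cs)"

definition cycle_edges :: "('a \<times> 'a) set \<Rightarrow> 'a list \<Rightarrow> ('a \<times> 'a) set" where
  "cycle_edges E cs = {(u, v) \<in> E. \<exists>i < length cs.
       {u, v} = {cs ! i, cs ! ((i + 1) mod length cs)}}"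

end

theory Submission
  imports Defs
begin

text \<open>
  Let sign be +1 on one side of the bipartition and -1 on the other. As \<pi>_i(x) = i - x, an edge
  uv labelled \<pi>_i is satisfied by k iff k u + k v = i (mod n), i.e. iff y v - y u = sign v * i
  (mod n) for y = sign * k. Consistent labelings are therefore potentials modulo n for the
  antisymmetric edge weight sign v * i, and such potentials exist iff every closed walk has
  weight 0 (mod n). A closed walk that repeats a vertex or has a chord splits into two shorter
  closed walks whose weights add up, so it suffices that every chordless cycle has weight 0,
  which is exactly the consistency of its labeling.
\<close>

fun walk_weight :: "('a \<Rightarrow> 'a \<Rightarrow> int) \<Rightarrow> 'a list \<Rightarrow> int" where
  "walk_weight w (a # b # xs) = w a b + walk_weight w (b # xs)"
| "walk_weight w _ = 0"

lemma walk_weight_append: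
  "walk_weight w (xs @ y # ys) = walk_weight w (xs @ [y]) + walk_weight w (y # ys)"
  by (induction xs rule: induct_list012) auto

lemma walk_weight_snoc:
  "xs \<noteq> [] \<Longrightarrow> walk_weight w (xs @ [b]) = walk_weight w xs + w (last xs) b"
  by (induction xs rule: induct_list012) auto

lemma walk_weight_rev:
  assumes "\<And>a b. R a b \<Longrightarrow> w b a = - w a b" and "successively R xs"
  shows "walk_weight w (rev xs) = - walk_weight w xs"
  using assms(2)
proof (induction xs rule: induct_list012)
  case (3 x y zs)
  have "walk_weight w (rev (x # y # zs)) = walk_weight w (rev zs @ [y]) + w y x"
    using walk_weight_append[of w "rev zs" y "[x]"] by simp
  with 3 assms(1) show ?case by simp
qed auto

lemma walk_weight_telescope:
  assumes "successively (\<lambda>a b. N dvd y b - y a - w a b) xs" and "xs \<noteq> []"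
  shows "N dvd walk_weight w xs - (y (last xs) - y (hd xs))"
  using assms
proof (induction xs rule: induct_list012)
  case (3 a b xs)
  then have "N dvd walk_weight w (b # xs) - (y (last (b # xs)) - y b)"
    and "N dvd y b - y a - w a b" by auto
  from dvd_diff[OF this] show ?case by (simp add: algebra_simps)
qed auto

definition closed_walk :: "('a \<Rightarrow> 'a \<Rightarrow> bool) \<Rightarrow> 'a list \<Rightarrow> bool" where
  "closed_walk R cs \<longleftrightarrow> successively R (cs @ [hd cs])"

definition cycle_weight :: "('a \<Rightarrow> 'a \<Rightarrow> int) \<Rightarrow> 'a list \<Rightarrow> int" where
  "cycle_weight w cs = walk_weight w (cs @ [hd cs])"

definition chordless :: "('a \<Rightarrow> 'a \<Rightarrow> bool) \<Rightarrow> 'a list \<Rightarrow> bool" where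
  "chordless R cs \<longleftrightarrow> (\<forall>i < length cs. \<forall>j < length cs. R (cs ! i) (cs ! j) \<longrightarrow>
     j = (i + 1) mod length cs \<or> i = (j + 1) mod length cs)"

lemma closed_walk_iff_nth:
  assumes "cs \<noteq> []"
  shows "closed_walk R cs \<longleftrightarrow> (\<forall>i < length cs. R (cs ! i) (cs ! ((i + 1) mod length cs)))"
proof -
  have "(cs @ [hd cs]) ! Suc i = cs ! ((i + 1) mod length cs)" if "i < length cs" for i
    using that assms by (cases "Suc i = length cs") (auto simp: nth_append hd_conv_nth)
  then show ?thesis
    unfolding closed_walk_def successively_conv_nth by (auto simp: nth_append)
qed

lemma closed_walk_split_at_repeat:
  assumes "closed_walk R (p @ v # q @ v # r)"
  shows "closed_walk R (v # q)" and "closed_walk R (p @ v # r)"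
    and "cycle_weight w (p @ v # q @ v # r) = cycle_weight w (v # q) + cycle_weight w (p @ v # r)"
proof -
  define h where "h = hd (p @ v # r)"
  have h: "hd (p @ v # q @ v # r) = h" unfolding h_def by (cases p) auto
  have walk: "successively R (p @ v # q @ v # r @ [h])"
    using assms h unfolding closed_walk_def by simp
  then show "closed_walk R (v # q)"
    using successively_append_iff[of R p] successively_append_iff[of R "v # q @ [v]" "r @ [h]"]
    unfolding closed_walk_def by simp
  from walk show "closed_walk R (p @ v # r)"
    using successively_append_iff[of R "v # q" "v # r @ [h]"]
    unfolding closed_walk_def h_def[symmetric] by (auto simp: successively_append_iff)
  show "cycle_weight w (p @ v # q @ v # r) = cycle_weight w (v # q) + cycle_weight w (p @ v # r)"
    unfolding cycle_weight_def h h_def[symmetric]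
    using walk_weight_append[of w p v "q @ v # r @ [h]"]
      walk_weight_append[of w "v # q" v "r @ [h]"] walk_weight_append[of w p v "r @ [h]"]
    by simp
qed

lemma closed_walk_split_at_chord:
  assumes "closed_walk R (p @ u # q @ v # r)" and "R u v" and "R v u" and "w v u = - w u v"
  shows "closed_walk R (u # q @ [v])" and "closed_walk R (p @ u # v # r)"
    and "cycle_weight w (p @ u # q @ v # r) =
           cycle_weight w (u # q @ [v]) + cycle_weight w (p @ u # v # r)"
proof -
  define h where "h = hd (p @ u # v # r)"
  have h: "hd (p @ u # q @ v # r) = h" unfolding h_def by (cases p) auto
  have walk: "successively R (p @ u # q @ v # r @ [h])"
    using assms(1) h unfolding closed_walk_def by simp
  then have "successively R (u # q @ [v])"
    using successively_append_iff[of R p] successively_append_iff[of R "u # q @ [v]" "r @ [h]"]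
    by simp
  then show "closed_walk R (u # q @ [v])"
    using assms(3) successively_append_iff[of R "u # q @ [v]" "[u]"]
    unfolding closed_walk_def by simp
  from walk show "closed_walk R (p @ u # v # r)"
    using assms(2) successively_append_iff[of R "u # q" "v # r @ [h]"]
    unfolding closed_walk_def h_def[symmetric] by (auto simp: successively_append_iff)
  show "cycle_weight w (p @ u # q @ v # r) =
          cycle_weight w (u # q @ [v]) + cycle_weight w (p @ u # v # r)"
    unfolding cycle_weight_def h h_def[symmetric]
    using walk_weight_append[of w p u "q @ v # r @ [h]"]
      walk_weight_append[of w "u # q" v "r @ [h]"] walk_weight_append[of w "u # q" v "[u]"]
      walk_weight_append[of w p u "v # r @ [h]"] assms(4)
    by simp
qed

lemma split_list_at_two_positions:
  assumes "i < j" and "j < length xs"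
  shows "xs = take i xs @ xs ! i # drop (Suc i) (take j xs) @ xs ! j # drop (Suc j) xs"
proof -
  have "xs = take j xs @ xs ! j # drop (Suc j) xs"
    using assms(2) id_take_nth_drop by blast
  moreover have "take j xs = take i xs @ xs ! i # drop (Suc i) (take j xs)"
    using assms id_take_nth_drop[of i "take j xs"] by simp
  ultimately show ?thesis by (metis append.assoc append_Cons)
qed

lemma not_chordless_obtains_chord:
  assumes sym: "\<And>a b. R a b \<Longrightarrow> R b a" and irrefl: "\<And>a. \<not> R a a"
    and "\<not> chordless R cs"
  obtains p u q v r where "cs = p @ u # q @ v # r" and "R u v" and "q \<noteq> []" and "p @ r \<noteq> []"
proof -
  define m where "m = length cs"
  obtain i j where ij: "i < j" "j < m" "R (cs ! i) (cs ! j)"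
    and not_next: "j \<noteq> (i + 1) mod m" "i \<noteq> (j + 1) mod m"
  proof -
    obtain i j where chord: "i < m" "j < m" "R (cs ! i) (cs ! j)"
      "j \<noteq> (i + 1) mod m" "i \<noteq> (j + 1) mod m"
      using assms(3) unfolding chordless_def m_def by blast
    have "i \<noteq> j" using irrefl chord(3) by blast
    then consider "i < j" | "j < i" by linarith
    then show ?thesis
    proof cases
      case 1
      then show ?thesis using that chord by blast
    next
      case 2
      then show ?thesis using that[of j i] chord sym by blast
    qed
  qed
  define p q r where "p = take i cs" "q = drop (Suc i) (take j cs)" "r = drop (Suc j) cs"
  have "cs = p @ cs ! i # q @ cs ! j # r"
    unfolding p_q_r_def using split_list_at_two_positions ij(1,2) m_def by blast
  moreover have "q \<noteq> []"
    using ij(1,2) not_next(1) unfolding p_q_r_def m_def by auto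
  moreover have "p @ r \<noteq> []"
  proof
    assume "p @ r = []"
    then have "i = 0" "j = m - 1" using ij(1,2) unfolding p_q_r_def m_def by auto
    then show False using not_next(2) ij(1,2) by simp
  qed
  ultimately show ?thesis using that ij(3) by blast
qed

lemma cycle_weight_dvd_if_chordless_cycles:
  assumes sym: "\<And>a b. R a b \<Longrightarrow> R b a" and irrefl: "\<And>a. \<not> R a a"
    and antisym: "\<And>a b. R a b \<Longrightarrow> w b a = - w a b"
    and chordless_cycles: "\<And>cs. closed_walk R cs \<Longrightarrow> distinct cs \<Longrightarrow> 3 \<le> length cs \<Longrightarrow>
      chordless R cs \<Longrightarrow> N dvd cycle_weight w cs"
    and "closed_walk R cs"
  shows "N dvd cycle_weight w cs"
  using assms(5)
proof (induction "length cs" arbitrary: cs rule: less_induct)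
  case less
  consider (short) "length cs < 3" | (repeat) "\<not> distinct cs" | (chord) "\<not> chordless R cs"
    | (cycle) "distinct cs" "3 \<le> length cs" "chordless R cs"
    by (meson not_less)
  then show ?case
  proof cases
    case short
    show ?thesis
    proof (cases cs rule: remdups_adj.cases)
      case (2 a)
      then show ?thesis using less.prems irrefl unfolding closed_walk_def by simp
    next
      case (3 a b zs)
      then have "zs = []" "R a b" using short less.prems unfolding closed_walk_def by auto
      then show ?thesis using 3 antisym[of a b] unfolding cycle_weight_def by simp
    qed (simp add: cycle_weight_def)
  next
    case repeat
    then obtain p v q r where cs: "cs = p @ v # q @ v # r"
      using not_distinct_decomp by fastforce
    have "length (v # q) < length cs" "length (p @ v # r) < length cs"
      unfolding cs by auto
    then show ?thesis
      using closed_walk_split_at_repeat[OF less.prems[unfolded cs]] less.hyps cs by (metis dvd_add)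
  next
    case chord
    obtain p u q v r where cs: "cs = p @ u # q @ v # r" and "R u v" "q \<noteq> []" "p @ r \<noteq> []"
      using not_chordless_obtains_chord[OF sym irrefl chord] .
    note split = closed_walk_split_at_chord[OF less.prems[unfolded cs] \<open>R u v\<close>
        sym[OF \<open>R u v\<close>] antisym[OF \<open>R u v\<close>]]
    have "length (u # q @ [v]) < length cs" "length (p @ u # v # r) < length cs"
      using \<open>q \<noteq> []\<close> \<open>p @ r \<noteq> []\<close> unfolding cs by auto
    then show ?thesis
      using split less.hyps cs by (metis dvd_add)
  next
    case cycle
    then show ?thesis using chordless_cycles less.prems by blast
  qed
qed

text \<open>The potential of a vertex is the weight of a fixed walk to it from a fixed root of its
  connected component; adjacent vertices share their root.\<close>
lemma potential_if_closed_walks: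
  assumes sym: "\<And>a b. R a b \<Longrightarrow> R b a"
    and antisym: "\<And>a b. R a b \<Longrightarrow> w b a = - w a b"
    and closed_walks: "\<And>cs. closed_walk R cs \<Longrightarrow> N dvd cycle_weight w cs"
  obtains y where "\<And>a b. R a b \<Longrightarrow> N dvd y b - y a - w a b"
proof -
  define walk_from where
    "walk_from r u xs \<longleftrightarrow> successively R xs \<and> xs \<noteq> [] \<and> hd xs = r \<and> last xs = u" for r u xs
  define root where "root u = (SOME r. \<exists>xs. walk_from r u xs)" for u
  define path where "path u = (SOME xs. walk_from (root u) u xs)" for u
  have path: "walk_from (root u) u (path u)" for u
  proof -
    have "walk_from u u [u]" unfolding walk_from_def by simp
    then have "\<exists>xs. walk_from (root u) u xs"
      unfolding root_def by (rule someI[where P = "\<lambda>r. \<exists>xs. walk_from r u xs", OF exI])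
    then show ?thesis unfolding path_def by (rule someI_ex)
  qed
  have extend: "walk_from r b (xs @ [b])" if "walk_from r a xs" "R a b" for r a b xs
    using that unfolding walk_from_def by (auto simp: successively_append_iff)
  have same_root: "root a = root b" if "R a b" for a b
  proof -
    have "(\<lambda>r. \<exists>xs. walk_from r a xs) = (\<lambda>r. \<exists>xs. walk_from r b xs)"
      using extend that sym by blast
    then show ?thesis unfolding root_def by simp
  qed
  define y where "y u = walk_weight w (path u)" for u
  have "N dvd y b - y a - w a b" if "R a b" for a b
  proof -
    define cs where "cs = path a @ butlast (rev (path b))"
    have "last (rev (path b)) = root a"
      using path[of b] same_root[OF that] unfolding walk_from_def by (simp add: last_rev)
    then have "butlast (rev (path b)) @ [root a] = rev (path b)"
      using path[of b] unfolding walk_from_def by (metis append_butlast_last_id rev_is_Nil_conv)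
    then have closing: "cs @ [hd cs] = path a @ rev (path b)"
      using path[of a] unfolding cs_def walk_from_def by simp
    have "successively R (rev (path b))"
      using path[of b] unfolding walk_from_def by (auto intro: successively_mono sym)
    then have "closed_walk R cs"
      using path[of a] path[of b] that unfolding closed_walk_def closing walk_from_def
      by (simp add: successively_append_iff hd_rev)
    then have "N dvd cycle_weight w cs" by (rule closed_walks)
    moreover obtain t where t: "rev (path b) = b # t"
      using path[of b] unfolding walk_from_def by (metis hd_rev list.collapse rev_is_Nil_conv)
    have "cycle_weight w cs = walk_weight w (path a @ [b]) + walk_weight w (rev (path b))"
      unfolding cycle_weight_def closing t by (rule walk_weight_append)
    also have "\<dots> = y a + w a b - y b"
      using walk_weight_snoc[of "path a" w b] walk_weight_rev[of R w "path b", OF antisym]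
        path[of a] path[of b] unfolding y_def walk_from_def by simp
    finally have "N dvd - (y b - y a - w a b)"
      using \<open>N dvd cycle_weight w cs\<close> by (simp add: algebra_simps)
    then show ?thesis by (simp only: dvd_minus_iff)
  qed
  then show ?thesis using that by blast
qed

lemma consistent_mono:
  assumes "consistent V E K n k" and "V' \<subseteq> V" and "E' \<subseteq> E"
  shows "consistent V' E' K n k"
  using assms unfolding consistent_def by blast

lemma adj_sym: "adj E u v \<Longrightarrow> adj E v u"
  unfolding adj_def by blast

lemma chordless_cycleI:
  assumes "E \<subseteq> V \<times> V" and "closed_walk (adj E) cs" and "distinct cs" and "3 \<le> length cs"
    and "chordless (adj E) cs"
  shows "chordless_cycle V E cs"
proof -
  have cs: "cs \<noteq> []" using assms(4) by auto
  have consecutive: "\<forall>i < length cs. adj E (cs ! i) (cs ! ((i + 1) mod length cs))"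
    using assms(2) closed_walk_iff_nth[OF cs] by blast
  have "set cs \<subseteq> V"
  proof
    fix x assume "x \<in> set cs"
    then obtain i where "i < length cs" "x = cs ! i" by (metis in_set_conv_nth)
    then show "x \<in> V" using consecutive assms(1) unfolding adj_def by blast
  qed
  then show ?thesis
    using assms(3-5) consecutive unfolding chordless_cycle_def chordless_def by blast
qed

lemma chordless_cycle_edges:
  assumes "chordless_cycle V E cs"
  shows "cycle_edges E cs = {(u, v) \<in> E. u \<in> set cs \<and> v \<in> set cs}"
proof (intro equalityI subsetI)
  have "0 < length cs" using assms unfolding chordless_cycle_def by linarith
  then have "cs ! (i mod length cs) \<in> set cs" for i by (meson mod_less_divisor nth_mem)
  moreover fix e assume "e \<in> cycle_edges E cs"
  ultimately show "e \<in> {(u, v) \<in> E. u \<in> set cs \<and> v \<in> set cs}"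
    unfolding cycle_edges_def by (auto simp: doubleton_eq_iff)
next
  fix e assume "e \<in> {(u, v) \<in> E. u \<in> set cs \<and> v \<in> set cs}"
  then obtain i j where e: "e = (cs ! i, cs ! j)" "e \<in> E" "i < length cs" "j < length cs"
    by (auto simp: in_set_conv_nth)
  then have "j = (i + 1) mod length cs \<or> i = (j + 1) mod length cs"
    using assms unfolding chordless_cycle_def adj_def by blast
  then show "e \<in> cycle_edges E cs"
    using e unfolding cycle_edges_def by blast
qed

lemma has_consistent_chordless_cycle:
  assumes "chordless_cycle V E cs" and "has_consistent V E K n"
  shows "has_consistent (set cs) (cycle_edges E cs) K n"
proof -
  obtain k where k: "consistent V E K n k" using assms(2) unfolding has_consistent_def by blast
  have "set cs \<subseteq> V" using assms(1) unfolding chordless_cycle_def by blast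
  moreover have "cycle_edges E cs \<subseteq> E" unfolding cycle_edges_def by blast
  ultimately have "consistent (set cs) (cycle_edges E cs) K n k" by (rule consistent_mono[OF k])
  then show ?thesis unfolding has_consistent_def by blast
qed

lemma Ln_apply_eq_iff:
  assumes "f \<in> Ln n" and "y < n"
  shows "f x = y \<longleftrightarrow> int n dvd int x + int y - int (f 0)"
proof -
  obtain i where "i < n" and f: "f = Lperm n i" using assms(1) unfolding Ln_def by blast
  then have f0: "f 0 = i" by (simp add: Lperm_def)
  have "f x = y \<longleftrightarrow> (int i - int x) mod int n = int y mod int n"
    using assms(2) unfolding f Lperm_def by auto
  also have "\<dots> \<longleftrightarrow> int n dvd - (int x + int y - int i)"
    by (simp add: mod_eq_dvd_iff algebra_simps)
  finally show ?thesis unfolding f0 by (simp only: dvd_minus_iff)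
qed

locale Ln_labeled_bipartite_graph =
  fixes V :: "'a set" and E :: "('a \<times> 'a) set" and K :: "'a \<times> 'a \<Rightarrow> nat \<Rightarrow> nat" and n :: nat
    and A :: "'a set"
  assumes n_pos: "1 \<le> n"
    and graph: "oriented_simple_graph V E"
    and sides: "\<forall>(u, v) \<in> E. u \<in> A \<longleftrightarrow> v \<notin> A"
    and labels: "\<forall>e \<in> E. K e \<in> Ln n"
begin

definition sign :: "'a \<Rightarrow> int" where
  "sign u = (if u \<in> A then 1 else -1)"

text \<open>The index i of the label \<pi>_i = K e of the edge e joining u and v, read off as
  \<pi>_i 0 = i.\<close>
definition label :: "'a \<Rightarrow> 'a \<Rightarrow> int" where
  "label u v = int (K (if (u, v) \<in> E then (u, v) else (v, u)) 0)"

definition weight :: "'a \<Rightarrow> 'a \<Rightarrow> int" where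
  "weight u v = sign v * label u v"

lemma sign_edge: "(u, v) \<in> E \<Longrightarrow> sign v = - sign u"
  using sides unfolding sign_def by auto

lemma adj_irrefl: "\<not> adj E u u"
  using graph unfolding oriented_simple_graph_def adj_def by blast

lemma weight_antisym:
  assumes "adj E u v"
  shows "weight v u = - weight u v"
proof -
  have "(u, v) \<in> E \<and> (v, u) \<notin> E \<or> (v, u) \<in> E \<and> (u, v) \<notin> E"
    using assms graph unfolding adj_def oriented_simple_graph_def by blast
  then show ?thesis
  proof
    assume "(u, v) \<in> E \<and> (v, u) \<notin> E"
    then show ?thesis unfolding weight_def label_def using sign_edge[of u v] by simp
  next
    assume "(v, u) \<in> E \<and> (u, v) \<notin> E"
    then show ?thesis unfolding weight_def label_def using sign_edge[of v u] by simp
  qed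
qed

lemma edge_consistent_iff:
  assumes "(u, v) \<in> E" and "k v < n"
  shows "K (u, v) (k u) = k v \<longleftrightarrow>
    int n dvd sign v * int (k v) - sign u * int (k u) - weight u v"
proof -
  have "sign v * int (k v) - sign u * int (k u) - weight u v =
      sign v * (int (k u) + int (k v) - int (K (u, v) 0))"
    using sign_edge[OF assms(1)] assms(1) unfolding weight_def label_def
    by (simp add: algebra_simps)
  moreover have "int n dvd sign v * d \<longleftrightarrow> int n dvd d" for d
    unfolding sign_def by simp
  ultimately show ?thesis
    using Ln_apply_eq_iff[of "K (u, v)" n "k v" "k u"] labels assms by simp
qed

lemma cycle_weight_dvd_if_consistent:
  assumes "closed_walk (adj E) cs"
    and "consistent (set cs) {(u, v) \<in> E. u \<in> set cs \<and> v \<in> set cs} K n k"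
  shows "int n dvd cycle_weight weight cs"
proof (cases "cs = []")
  case True
  then show ?thesis by (simp add: cycle_weight_def)
next
  case False
  define y where "y u = sign u * int (k u)" for u
  have potential: "int n dvd y v - y u - weight u v"
    if "(u, v) \<in> E" "u \<in> set cs" "v \<in> set cs" for u v
  proof -
    have "K (u, v) (k u) = k v" "k v < n"
      using that assms(2) unfolding consistent_def by auto
    then show ?thesis using edge_consistent_iff[of u v k, OF that(1)] unfolding y_def by simp
  qed
  have edge: "int n dvd y b - y a - weight a b"
    if "adj E a b" "a \<in> set cs" "b \<in> set cs" for a b
  proof (cases "(a, b) \<in> E")
    case True
    then show ?thesis using potential that by blast
  next
    case False
    then have "int n dvd y a - y b - weight b a"
      using potential that unfolding adj_def by blast
    moreover have "y a - y b - weight b a = - (y b - y a - weight a b)"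
      using weight_antisym[OF that(1)] by simp
    ultimately show ?thesis by (simp only: dvd_minus_iff)
  qed
  have "successively (\<lambda>a b. int n dvd y b - y a - weight a b) (cs @ [hd cs])"
    using assms(1) unfolding closed_walk_def
    by (rule successively_mono) (use edge hd_in_set[OF False] in auto)
  from walk_weight_telescope[OF this] show ?thesis
    using False unfolding cycle_weight_def by simp
qed

lemma consistent_if_potential:
  assumes "\<And>a b. (a, b) \<in> E \<Longrightarrow> int n dvd y b - y a - weight a b"
  shows "has_consistent V E K n"
proof -
  define k where "k u = nat (sign u * y u mod int n)" for u
  have k: "int (k u) = sign u * y u mod int n" for u
    unfolding k_def using n_pos by simp
  have k_less: "k u < n" for u
  proof -
    have "int (k u) < int n" unfolding k using n_pos by simp
    then show ?thesis by simp
  qed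
  have k_potential: "int n dvd sign u * int (k u) - y u" for u
  proof -
    have "int n dvd int (k u) - sign u * y u"
      unfolding k by (simp add: mod_eq_dvd_iff[symmetric])
    moreover have "sign u * int (k u) - y u = sign u * (int (k u) - sign u * y u)"
      by (cases "u \<in> A") (simp_all add: sign_def)
    ultimately show ?thesis by simp
  qed
  have "K (u, v) (k u) = k v" if "(u, v) \<in> E" for u v
  proof -
    have "sign v * int (k v) - sign u * int (k u) - weight u v =
        (sign v * int (k v) - y v) - (sign u * int (k u) - y u) + (y v - y u - weight u v)"
      by simp
    then have "int n dvd sign v * int (k v) - sign u * int (k u) - weight u v"
      using k_potential assms[OF that] by (metis dvd_add dvd_diff)
    then show ?thesis using edge_consistent_iff[of u v k, OF that k_less[of v]] by simp
  qed
  then have "consistent V E K n k" unfolding consistent_def using k_less by auto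
  then show ?thesis unfolding has_consistent_def by blast
qed

lemma has_consistent_if_chordless_cycles:
  assumes cycles: "\<And>cs. chordless_cycle V E cs \<Longrightarrow> has_consistent (set cs) (cycle_edges E cs) K n"
  shows "has_consistent V E K n"
proof -
  have E_sub: "E \<subseteq> V \<times> V" using graph unfolding oriented_simple_graph_def by blast
  have "int n dvd cycle_weight weight cs"
    if "closed_walk (adj E) cs" "distinct cs" "3 \<le> length cs" "chordless (adj E) cs" for cs
  proof -
    have cycle: "chordless_cycle V E cs" by (rule chordless_cycleI[OF E_sub that])
    then obtain k where "consistent (set cs) (cycle_edges E cs) K n k"
      using cycles unfolding has_consistent_def by blast
    then show ?thesis
      using cycle_weight_dvd_if_consistent[OF that(1)] chordless_cycle_edges[OF cycle] by simp
  qed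
  then have "int n dvd cycle_weight weight cs" if "closed_walk (adj E) cs" for cs
    using cycle_weight_dvd_if_chordless_cycles[of "adj E" weight, OF adj_sym adj_irrefl
        weight_antisym _ that] by blast
  then obtain y where "\<And>a b. adj E a b \<Longrightarrow> int n dvd y b - y a - weight a b"
    using potential_if_closed_walks[of "adj E" weight, OF adj_sym weight_antisym] by blast
  then show ?thesis by (rule consistent_if_potential) (simp add: adj_def)
qed

end

theorem theorem9:
  fixes V :: "'a set" and E :: "('a \<times> 'a) set"
    and K :: "'a \<times> 'a \<Rightarrow> nat \<Rightarrow> nat" and n :: nat
  assumes "n \<ge> 1"
    and "oriented_simple_graph V E"
    and "bipartite V E"
    and "\<forall>e \<in> E. K e \<in> Ln n"
  shows "\<not> has_consistent V E K n \<longleftrightarrow>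
    (\<exists>cs. chordless_cycle V E cs \<and>
          \<not> has_consistent (set cs) (cycle_edges E cs) K n)"
proof -
  obtain A where "\<forall>(u, v) \<in> E. u \<in> A \<longleftrightarrow> v \<notin> A"
    using assms(3) unfolding bipartite_def by blast
  then interpret Ln_labeled_bipartite_graph V E K n A
    using assms by unfold_locales auto
  show ?thesis
    using has_consistent_if_chordless_cycles has_consistent_chordless_cycle by blast
qed

end
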